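(* Let $x_1,\dots,x_4,y_1,\dots,y_4\in\{-1,+1\}$ with $(x_k,y_k)\neq(-1,-1)$ for all $k\in\{1,2,3,4\}$. Then $$x_1x_4+x_2x_3+y_1y_2+y_3y_4-x_1y_1-x_2y_2-x_3y_3-x_4y_4\ge 0.$$ *)

theory Defs
  imports Main
begin

end

theory Submission
  imports Defs
begin

text \<open>For a sign pair \<open>(x, y) \<noteq> (-1, -1)\<close> the product is linear: \<open>x y = x + y - 1\<close>.
  Substituting this for the four products \<open>x\<^sub>k y\<^sub>k\<close> turns the expression into
  \<open>(x\<^sub>1 - 1)(x\<^sub>4 - 1) + (x\<^sub>2 - 1)(x\<^sub>3 - 1) + (y\<^sub>1 - 1)(y\<^sub>2 - 1) + (y\<^sub>3 - 1)(y\<^sub>4 - 1)\<close>,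
  a sum of products of two non-positive factors.\<close>

lemma sign_pair_mult_eq:
  fixes x y :: "'a :: comm_ring_1"
  assumes "x \<in> {-1, 1}" "y \<in> {-1, 1}" "(x, y) \<noteq> (-1, -1)"
  shows "x * y = x + y - 1"
  using assms by auto

lemma mult_pred_nonneg:
  fixes a b :: "'a :: linordered_idom"
  assumes "a \<le> 1" "b \<le> 1"
  shows "0 \<le> (a - 1) * (b - 1)"
  using assms by (simp add: mult_nonpos_nonpos)

theorem lemma16:
  fixes x1 x2 x3 x4 y1 y2 y3 y4 :: int
  assumes "x1 \<in> {-1, 1}" "x2 \<in> {-1, 1}" "x3 \<in> {-1, 1}" "x4 \<in> {-1, 1}"
    and "y1 \<in> {-1, 1}" "y2 \<in> {-1, 1}" "y3 \<in> {-1, 1}" "y4 \<in> {-1, 1}"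
    and "(x1, y1) \<noteq> (-1, -1)" "(x2, y2) \<noteq> (-1, -1)"
    and "(x3, y3) \<noteq> (-1, -1)" "(x4, y4) \<noteq> (-1, -1)"
  shows "x1*x4 + x2*x3 + y1*y2 + y3*y4 - x1*y1 - x2*y2 - x3*y3 - x4*y4 \<ge> 0"
proof -
  have "x1*y1 = x1 + y1 - 1" "x2*y2 = x2 + y2 - 1" "x3*y3 = x3 + y3 - 1" "x4*y4 = x4 + y4 - 1"
    using assms by (simp_all add: sign_pair_mult_eq)
  then have "x1*x4 + x2*x3 + y1*y2 + y3*y4 - x1*y1 - x2*y2 - x3*y3 - x4*y4
      = (x1 - 1) * (x4 - 1) + (x2 - 1) * (x3 - 1) + (y1 - 1) * (y2 - 1) + (y3 - 1) * (y4 - 1)"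
    by (simp add: algebra_simps)
  moreover have "x1 \<le> 1" "x2 \<le> 1" "x3 \<le> 1" "x4 \<le> 1" "y1 \<le> 1" "y2 \<le> 1" "y3 \<le> 1" "y4 \<le> 1"
    using assms(1-8) by auto
  ultimately show ?thesis
    by (simp add: mult_pred_nonneg add_nonneg_nonneg)
qed

end
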